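(* Let $0<q<1$. Then \[ \frac{q^{2/3}}{(1+q)[1/3]_{q^{2}}[5/6]_{q^{2}}}-\sum_{n=1}^{\infty}\frac{(1-q^{4n+1})(1/2|q^{2})_{n}^{2}(1/3|q^{2})_{n}(2/3|q^{2})_{n-1}}{(1-q^{2})([n]_{q^{2}}!)^{2}(7/6|q^{2})_{n}(5/6|q^{2})_{n+1}}\,q^{2n} =\frac{[1/6]_{q^{2}}}{[1/3]_{q^{2}}^{2}[1/2]_{q^{2}}}\cdot\frac{(q^{4/3},q^{2/3};q^{2})_{\infty}\,q^{11/12}}{(q^{1/3},q^{5/3};q^{2})_{\infty}\,\pi_{q}}. \]
   Context: Let $0<q<1$ and write $q^{x}=e^{x\log q}$. $(z;q)_\infty=\prod_{k\ge0}(1-zq^k)$, $(z_1,z_2;q)_\infty=(z_1;q)_\infty(z_2;q)_\infty$. $[z]_{q^2}=\frac{1-q^{2z}}{1-q^2}$; for integers $n\ge0$, $(x|q^2)_n=\prod_{k=0}^{n-1}[x+k]_{q^2}$ (empty product $=1$); $[0]_{q^2}!=1$, $[n]_{q^2}!=\prod_{k=1}^n[k]_{q^2}$. $\pi_q=(1-q^2)q^{1/4}\frac{(q^2;q^2)_\infty^2}{(q;q^2)_\infty^2}$. *)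

theory Defs
  imports "HOL-Analysis.Analysis"
begin

definition qpoch_inf :: "real \<Rightarrow> real \<Rightarrow> real" where
  "qpoch_inf z q = (\<Prod>k. (1 - z * q ^ k))"

text \<open>q-number [z]_{p} = (1 - p^z)/(1 - p), with p = q^2 written as base q: [z]_{q^2} = (1-q^(2z))/(1-q^2).\<close>
definition qnum :: "real \<Rightarrow> real \<Rightarrow> real" where
  "qnum q z = (1 - q powr (2 * z)) / (1 - q\<^sup>2)"

definition qshift :: "real \<Rightarrow> real \<Rightarrow> nat \<Rightarrow> real" where
  "qshift q x n = (\<Prod>k<n. qnum q (x + real k))"

definition qfact :: "real \<Rightarrow> nat \<Rightarrow> real" where
  "qfact q n = (\<Prod>k\<in>{1..n}. qnum q (real k))"

definition qpi :: "real \<Rightarrow> real" where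
  "qpi q = (1 - q\<^sup>2) * q powr (1/4) * (qpoch_inf (q\<^sup>2) (q\<^sup>2))\<^sup>2 / (qpoch_inf q (q\<^sup>2))\<^sup>2"

end

(*
  Put u = q^(1/3). Then every q^2-shifted factorial in the theorem is a finite product
  (u^j; u^6)_n divided by (1 - u^6)^n. With
    P_n = (u^9;u^6)_n^2 (u^8;u^6)_n (u^4;u^6)_n / ((u^6;u^6)_n^2 (u^7;u^6)_n (u^11;u^6)_n)
  the term of index n+1 of the series equals K (P_n - P_(n+1)), where K is the leading term
  q^(2/3) / ((1+q) [1/3] [5/6]); this reduces to one polynomial identity in u and x = u^(6n).
  Hence the series telescopes to K (1 - P_inf), and K P_inf becomes the right-hand side after
  peeling off one factor of (u^j; u^6)_inf for j = 1, 2, 3, 5.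
*)
theory Submission
  imports Defs
begin

definition qpoch :: "real \<Rightarrow> real \<Rightarrow> nat \<Rightarrow> real" where
  "qpoch z p n = (\<Prod>k<n. 1 - z * p ^ k)"

lemma qpoch_0 [simp]: "qpoch z p 0 = 1"
  by (simp add: qpoch_def)

lemma qpoch_Suc: "qpoch z p (Suc n) = qpoch z p n * (1 - z * p ^ n)"
  by (simp add: qpoch_def)

lemma qpoch_Suc_shift: "qpoch z p (Suc n) = (1 - z) * qpoch (z * p) p n"
  unfolding qpoch_def by (subst prod.lessThan_Suc_shift) (simp add: mult.assoc)

lemma qpoch_pos:
  assumes "0 \<le> z" "z < 1" "0 \<le> p" "p \<le> 1"
  shows "0 < qpoch z p n"
  unfolding qpoch_def
proof (rule prod_pos)
  fix k
  have "z * p ^ k \<le> z"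
    using assms by (simp add: mult_left_le power_le_one)
  then show "0 < 1 - z * p ^ k"
    using assms by simp
qed

lemma power_mult_less_one:
  fixes u x :: real
  assumes "0 \<le> u" "u < 1" "0 < j" "0 \<le> x" "x \<le> 1"
  shows "u ^ j * x < 1"
proof -
  have "u ^ j * x \<le> u ^ j"
    using assms by (simp add: mult_left_le)
  also have "u ^ j < 1"
    using assms by (simp add: power_less_one_iff)
  finally show ?thesis .
qed

lemma qpoch_power_pos:
  assumes "0 < u" "u < 1" "0 < j"
  shows "0 < qpoch (u ^ j) (u ^ k) n"
  using assms power_mult_less_one[of u j 1] by (intro qpoch_pos) (simp_all add: power_le_one)

lemma convergent_prod_qpoch:
  fixes z p :: real
  assumes "\<bar>p\<bar> < 1"
  shows "convergent_prod (\<lambda>k. 1 - z * p ^ k)"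
proof -
  have "summable (\<lambda>k. norm ((1 - z * p ^ k) - 1))"
    using assms by (simp add: abs_mult power_abs summable_geometric)
  then show ?thesis
    by (intro abs_convergent_prod_imp_convergent_prod summable_imp_abs_convergent_prod)
qed

lemma LIMSEQ_qpoch:
  assumes "\<bar>p\<bar> < 1"
  shows "qpoch z p \<longlonglongrightarrow> qpoch_inf z p"
proof -
  have "(\<lambda>n. qpoch z p (Suc n)) \<longlonglongrightarrow> qpoch_inf z p"
    using convergent_prod_LIMSEQ[OF convergent_prod_qpoch[OF assms]]
    by (simp add: qpoch_def qpoch_inf_def lessThan_Suc_atMost)
  then show ?thesis
    by (rule LIMSEQ_imp_Suc)
qed

lemma qpoch_inf_nonzero:
  assumes "0 \<le> p" "p < 1" "0 \<le> z" "z < 1"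
  shows "qpoch_inf z p \<noteq> 0"
  unfolding qpoch_inf_def
proof (rule prodinf_nonzero[OF convergent_prod_qpoch])
  fix k
  have "z * p ^ k \<le> z"
    using assms by (simp add: mult_left_le power_le_one)
  then show "1 - z * p ^ k \<noteq> 0"
    using assms by simp
qed (use assms in simp)

lemma qpoch_inf_shift:
  assumes "\<bar>p\<bar> < 1"
  shows "qpoch_inf z p = (1 - z) * qpoch_inf (z * p) p"
proof (rule LIMSEQ_unique)
  show "(\<lambda>n. qpoch z p (Suc n)) \<longlonglongrightarrow> qpoch_inf z p"
    using LIMSEQ_qpoch[OF assms] by (rule LIMSEQ_Suc)
  show "(\<lambda>n. qpoch z p (Suc n)) \<longlonglongrightarrow> (1 - z) * qpoch_inf (z * p) p"
    unfolding qpoch_Suc_shift by (intro tendsto_intros LIMSEQ_qpoch assms)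
qed

lemma qshift_eq_qpoch:
  assumes "0 < q"
  shows "qshift q x n = qpoch (q powr (2 * x)) (q\<^sup>2) n / (1 - q\<^sup>2) ^ n"
proof -
  have "qnum q (x + real k) = (1 - q powr (2 * x) * (q\<^sup>2) ^ k) / (1 - q\<^sup>2)" for k
  proof -
    have "q powr (2 * (x + real k)) = q powr (2 * x) * q powr (real (2 * k))"
      by (simp add: distrib_left powr_add)
    also have "q powr (real (2 * k)) = (q\<^sup>2) ^ k"
      using assms by (simp only: powr_realpow power_mult)
    finally show ?thesis
      by (simp add: qnum_def)
  qed
  then show ?thesis
    by (simp add: qshift_def qpoch_def prod_dividef)
qed

lemma qfact_eq_qpoch:
  assumes "0 < q"
  shows "qfact q n = qpoch (q\<^sup>2) (q\<^sup>2) n / (1 - q\<^sup>2) ^ n"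
proof -
  have "qnum q (real (Suc k)) = (1 - q\<^sup>2 * (q\<^sup>2) ^ k) / (1 - q\<^sup>2)" for k
  proof -
    have "q powr (2 * real (Suc k)) = q powr (real (2 * Suc k))"
      by simp
    also have "\<dots> = q ^ (2 * Suc k)"
      using assms by (rule powr_realpow)
    also have "\<dots> = q\<^sup>2 * (q\<^sup>2) ^ k"
      by (simp only: power_mult power_Suc)
    finally show ?thesis
      unfolding qnum_def by (rule arg_cong)
  qed
  moreover have "qfact q n = (\<Prod>k<n. qnum q (real (Suc k)))"
    unfolding qfact_def by (rule prod.reindex_bij_witness[where i = Suc and j = "\<lambda>k. k - 1"]) auto
  ultimately show ?thesis
    by (simp add: qpoch_def prod_dividef)
qed

lemma powr_cube:
  assumes "0 < u"
  shows "(u ^ 3) powr (real k / 3) = u ^ k"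
proof -
  have "(u ^ 3) powr (real k / 3) = (u powr 3) powr (real k / 3)"
    using assms by (simp add: powr_realpow)
  also have "\<dots> = u powr real k"
    by (simp add: powr_powr)
  also have "\<dots> = u ^ k"
    using assms by (rule powr_realpow)
  finally show ?thesis .
qed

lemma qshift_cube:
  assumes "0 < u"
  shows "qshift (u ^ 3) (real j / 6) n = qpoch (u ^ j) (u ^ 6) n / (1 - u ^ 6) ^ n"
proof -
  have "(u ^ 3) powr (2 * (real j / 6)) = u ^ j"
    using powr_cube[OF assms, of j] by simp
  then show ?thesis
    using assms by (simp add: qshift_eq_qpoch power_mult[symmetric])
qed

lemma qshift_cube_Suc:
  assumes "0 < u"
  shows "qshift (u ^ 3) (real j / 6) (Suc n)
    = (1 - u ^ j) * qpoch (u ^ (j + 6)) (u ^ 6) n / ((1 - u ^ 6) * (1 - u ^ 6) ^ n)"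
  unfolding qshift_cube[OF assms] qpoch_Suc_shift by (simp add: power_add)

lemma qfact_cube:
  assumes "0 < u"
  shows "qfact (u ^ 3) n = qpoch (u ^ 6) (u ^ 6) n / (1 - u ^ 6) ^ n"
  using assms by (simp add: qfact_eq_qpoch power_mult[symmetric])

lemma qnum_cube:
  assumes "0 < u"
  shows "qnum (u ^ 3) (real j / 6) = (1 - u ^ j) / (1 - u ^ 6)"
proof -
  have "(u ^ 3) powr (2 * (real j / 6)) = u ^ j"
    using powr_cube[OF assms, of j] by simp
  then show ?thesis
    by (simp add: qnum_def power_mult[symmetric])
qed

definition tele_ratio :: "real \<Rightarrow> nat \<Rightarrow> real" where
  "tele_ratio u m = (qpoch (u ^ 9) (u ^ 6) m)\<^sup>2 * qpoch (u ^ 8) (u ^ 6) m * qpoch (u ^ 4) (u ^ 6) m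
    / ((qpoch (u ^ 6) (u ^ 6) m)\<^sup>2 * qpoch (u ^ 7) (u ^ 6) m * qpoch (u ^ 11) (u ^ 6) m)"

definition tele_const :: "real \<Rightarrow> real" where
  "tele_const u = (1 - u ^ 6) * (1 - u ^ 3) * u\<^sup>2 / ((1 - u\<^sup>2) * (1 - u ^ 5))"

lemma tele_ratio_Suc:
  assumes "x = (u ^ 6) ^ m"
  shows "tele_ratio u (Suc m) = tele_ratio u m
     * ((1 - u ^ 9 * x)\<^sup>2 * (1 - u ^ 8 * x) * (1 - u ^ 4 * x)
        / ((1 - u ^ 6 * x)\<^sup>2 * (1 - u ^ 7 * x) * (1 - u ^ 11 * x)))"
  unfolding assms tele_ratio_def qpoch_Suc times_divide_times_eq power_mult_distrib
  by (simp only: mult_ac)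

lemma tele_factor_identity:
  fixes u x :: real
  shows "(1 - u ^ 6 * x)\<^sup>2 * (1 - u ^ 7 * x) * (1 - u ^ 11 * x)
       - (1 - u ^ 9 * x)\<^sup>2 * (1 - u ^ 8 * x) * (1 - u ^ 4 * x)
     = (1 - u ^ 15 * x\<^sup>2) * (1 - u ^ 3) * (1 - u\<^sup>2)\<^sup>2 * u ^ 4 * x"
  by algebra

lemma cube_factors_nonzero:
  assumes "0 < u" "u < 1" "0 < j" "x = (u ^ 6) ^ m"
  shows "1 - u ^ j \<noteq> 0" "1 - u ^ j * x \<noteq> 0" "qpoch (u ^ j) (u ^ 6) m \<noteq> 0"
  using power_mult_less_one[of u j 1] power_mult_less_one[of u j x] qpoch_power_pos[of u j 6 m] assms
  by (simp_all add: power_le_one)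

lemma tele_ratio_diff:
  assumes "0 < u" "u < 1" and x: "x = (u ^ 6) ^ m"
  shows "tele_ratio u m - tele_ratio u (Suc m) = tele_ratio u m
     * ((1 - u ^ 15 * x\<^sup>2) * (1 - u ^ 3) * (1 - u\<^sup>2)\<^sup>2 * u ^ 4 * x
        / ((1 - u ^ 6 * x)\<^sup>2 * (1 - u ^ 7 * x) * (1 - u ^ 11 * x)))"
proof -
  have denom_nz: "(1 - u ^ 6 * x)\<^sup>2 * (1 - u ^ 7 * x) * (1 - u ^ 11 * x) \<noteq> 0"
    using cube_factors_nonzero(2)[OF assms(1,2) _ x] by simp
  have factor: "1 - (1 - u ^ 9 * x)\<^sup>2 * (1 - u ^ 8 * x) * (1 - u ^ 4 * x)
        / ((1 - u ^ 6 * x)\<^sup>2 * (1 - u ^ 7 * x) * (1 - u ^ 11 * x))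
      = (1 - u ^ 15 * x\<^sup>2) * (1 - u ^ 3) * (1 - u\<^sup>2)\<^sup>2 * u ^ 4 * x
        / ((1 - u ^ 6 * x)\<^sup>2 * (1 - u ^ 7 * x) * (1 - u ^ 11 * x))"
    unfolding tele_factor_identity[of u x, symmetric] diff_divide_distrib divide_self[OF denom_nz] ..
  have "a - a * r = a * (1 - r)" for a r :: real
    by (simp add: right_diff_distrib)
  then show ?thesis
    unfolding tele_ratio_Suc[OF x] factor[symmetric] .
qed

definition summand :: "real \<Rightarrow> nat \<Rightarrow> real" where
  "summand q n = (1 - q ^ (4 * Suc n + 1)) * (qshift q (1/2) (Suc n))\<^sup>2 * qshift q (1/3) (Suc n)
      * qshift q (2/3) n
    / ((1 - q\<^sup>2) * (qfact q (Suc n))\<^sup>2 * qshift q (7/6) (Suc n) * qshift q (5/6) (Suc n + 1))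
    * q ^ (2 * Suc n)"

lemma summand_telescopes:
  assumes "0 < u" "u < 1"
  shows "summand (u ^ 3) m = tele_const u * (tele_ratio u m - tele_ratio u (Suc m))"
proof -
  \<comment> \<open>Naming the factors keeps \<open>field_simps\<close> from multiplying out the binomials.\<close>
  define x where "x = (u ^ 6) ^ m"
  define e where "e = 1 - u ^ 6"
  define a where "a j = qpoch (u ^ j) (u ^ 6) m" for j
  define b where "b j = 1 - u ^ j" for j :: nat
  define c where "c j = 1 - u ^ j * x" for j :: nat
  define y where "y = u ^ 4 * x"
  define w where "w = 1 - u ^ 15 * x\<^sup>2"
  have qs: "qshift (u ^ 3) (real j / 6) n = qpoch (u ^ j) (u ^ 6) n / e ^ n" for j n
    using qshift_cube[OF assms(1)] by (simp add: e_def)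
  have qs_Suc: "qshift (u ^ 3) (real j / 6) (Suc m) = b j * a (j + 6) / (e * e ^ m)" for j
    using qshift_cube_Suc[OF assms(1), of j m] by (simp add: a_def b_def e_def)
  have qp_Suc: "qpoch (u ^ j) (u ^ 6) (Suc m) = a j * c j" for j
    by (simp add: qpoch_Suc a_def c_def x_def)
  have "qshift (u ^ 3) (1/2) (Suc m) = b 3 * a 9 / (e * e ^ m)"
    using qs_Suc[of 3] by simp
  moreover have "qshift (u ^ 3) (1/3) (Suc m) = b 2 * a 8 / (e * e ^ m)"
    using qs_Suc[of 2] by simp
  moreover have "qshift (u ^ 3) (2/3) m = a 4 / e ^ m"
    using qs[of 4 m] by (simp add: a_def)
  moreover have "qshift (u ^ 3) (7/6) (Suc m) = a 7 * c 7 / (e * e ^ m)"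
    using qs[of 7 "Suc m"] by (simp add: qp_Suc)
  moreover have "qshift (u ^ 3) (5/6) (Suc m + 1) = b 5 * (a 11 * c 11) / (e * (e * e ^ m))"
    using qs[of 5 "Suc (Suc m)"] qpoch_Suc_shift[of "u ^ 5" "u ^ 6" "Suc m"] qp_Suc[of 11]
    by (simp add: power_add b_def)
  moreover have "qfact (u ^ 3) (Suc m) = a 6 * c 6 / (e * e ^ m)"
    using qfact_cube[OF assms(1), of "Suc m"] qp_Suc[of 6] by (simp add: e_def)
  moreover have "1 - (u ^ 3) ^ (4 * Suc m + 1) = w"
    by (simp add: w_def x_def power_mult[symmetric] power_add[symmetric])
  moreover have "(u ^ 3) ^ (2 * Suc m) = u\<^sup>2 * y"
    by (simp add: x_def y_def power_mult[symmetric] power_add[symmetric])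
  moreover have "1 - (u ^ 3)\<^sup>2 = e"
    by (simp add: e_def power_mult[symmetric])
  ultimately have "summand (u ^ 3) m = w * (b 3 * a 9 / (e * e ^ m))\<^sup>2
      * (b 2 * a 8 / (e * e ^ m)) * (a 4 / e ^ m)
    / (e * (a 6 * c 6 / (e * e ^ m))\<^sup>2 * (a 7 * c 7 / (e * e ^ m))
       * (b 5 * (a 11 * c 11) / (e * (e * e ^ m)))) * (u\<^sup>2 * y)"
    unfolding summand_def by simp
  also have "\<dots> = e * b 3 * u\<^sup>2 / (b 2 * b 5) * ((a 9)\<^sup>2 * a 8 * a 4 / ((a 6)\<^sup>2 * a 7 * a 11)
      * (w * b 3 * (b 2)\<^sup>2 * y / ((c 6)\<^sup>2 * c 7 * c 11)))"
  proof -
    note nz = cube_factors_nonzero[OF assms _ x_def, folded a_def b_def c_def]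
    have "e \<noteq> 0"
      using nz(1)[of 6] by (simp add: b_def e_def)
    then show ?thesis
      using nz(3)[of 4] nz(3)[of 6] nz(3)[of 7] nz(3)[of 8] nz(3)[of 9] nz(3)[of 11]
        nz(1)[of 2] nz(1)[of 3] nz(1)[of 5] nz(2)[of 6] nz(2)[of 7] nz(2)[of 11] assms
      by (simp add: field_simps power2_eq_square)
  qed
  also have "\<dots> = tele_const u * (tele_ratio u m - tele_ratio u (Suc m))"
    unfolding tele_ratio_diff[OF assms x_def]
    by (simp add: tele_const_def tele_ratio_def a_def b_def c_def e_def w_def y_def)
  finally show ?thesis .
qed

definition tele_limit :: "real \<Rightarrow> real" where
  "tele_limit u = (qpoch_inf (u ^ 9) (u ^ 6))\<^sup>2 * qpoch_inf (u ^ 8) (u ^ 6)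
      * qpoch_inf (u ^ 4) (u ^ 6)
    / ((qpoch_inf (u ^ 6) (u ^ 6))\<^sup>2 * qpoch_inf (u ^ 7) (u ^ 6) * qpoch_inf (u ^ 11) (u ^ 6))"

lemma LIMSEQ_tele_ratio:
  assumes "0 < u" "u < 1"
  shows "tele_ratio u \<longlonglongrightarrow> tele_limit u"
proof -
  have u_lt: "u ^ j < 1" if "0 < j" for j
    using assms that by (simp add: power_less_one_iff)
  have p: "\<bar>u ^ 6\<bar> < 1"
    using assms u_lt[of 6] by simp
  have "qpoch_inf (u ^ j) (u ^ 6) \<noteq> 0" if "0 < j" for j
    using assms u_lt[OF that] u_lt[of 6] by (intro qpoch_inf_nonzero) simp_all
  then show ?thesis
    unfolding tele_ratio_def[abs_def] tele_limit_def
    by (intro tendsto_intros LIMSEQ_qpoch[OF p]) simp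
qed

lemma summand_sums:
  assumes "0 < u" "u < 1"
  shows "summand (u ^ 3) sums (tele_const u * (1 - tele_limit u))"
proof -
  have "summand (u ^ 3) = (\<lambda>n. tele_const u * (tele_ratio u n - tele_ratio u (Suc n)))"
    using summand_telescopes[OF assms] by blast
  moreover have "tele_ratio u 0 = 1"
    by (simp add: tele_ratio_def)
  ultimately show ?thesis
    using sums_mult[OF telescope_sums'[OF LIMSEQ_tele_ratio[OF assms]], of "tele_const u"] by simp
qed

lemma tele_limit_closed_form:
  assumes "0 < u" "u < 1"
  shows "tele_const u * tele_limit u = qnum (u ^ 3) (1/6) / ((qnum (u ^ 3) (1/3))\<^sup>2 * qnum (u ^ 3) (1/2))
      * (qpoch_inf ((u ^ 3) powr (4/3)) ((u ^ 3)\<^sup>2) * qpoch_inf ((u ^ 3) powr (2/3)) ((u ^ 3)\<^sup>2)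
         * (u ^ 3) powr (11/12))
      / (qpoch_inf ((u ^ 3) powr (1/3)) ((u ^ 3)\<^sup>2) * qpoch_inf ((u ^ 3) powr (5/3)) ((u ^ 3)\<^sup>2)
         * qpi (u ^ 3))"
  (is "?lhs = ?rhs")
proof -
  define Q where "Q j = qpoch_inf (u ^ j) (u ^ 6)" for j :: nat
  define b where "b j = 1 - u ^ j" for j :: nat
  define r where "r = (u ^ 3) powr (1/4)"
  have u_lt: "u ^ j < 1" if "0 < j" for j
    using assms that by (simp add: power_less_one_iff)
  have p: "\<bar>u ^ 6\<bar> < 1"
    using assms u_lt[of 6] by simp
  have Q_nz: "Q j \<noteq> 0" if "0 < j" for j
    unfolding Q_def using assms u_lt[OF that] u_lt[of 6] by (intro qpoch_inf_nonzero) simp_all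
  have b_nz: "b j \<noteq> 0" if "0 < j" for j
    using u_lt[OF that] by (simp add: b_def)
  have Q_shift: "Q j = b j * Q (j + 6)" for j
    unfolding Q_def b_def by (subst qpoch_inf_shift[OF p]) (simp add: power_add)
  have powr_third: "(u ^ 3) powr (real k / 3) = u ^ k" for k
    using powr_cube[OF assms(1)] .
  have "(u ^ 3) powr (11/12) = r * u\<^sup>2"
    using powr_add[of "u ^ 3" "1/4" "2/3"] powr_third[of 2] by (simp add: r_def)
  moreover have "(u ^ 3) powr (4/3) = u ^ 4" "(u ^ 3) powr (2/3) = u\<^sup>2"
      "(u ^ 3) powr (1/3) = u ^ 1" "(u ^ 3) powr (5/3) = u ^ 5"
    using powr_third[of 4] powr_third[of 2] powr_third[of 1] powr_third[of 5] by simp_all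
  moreover have "qnum (u ^ 3) (1/6) = b 1 / b 6" "qnum (u ^ 3) (1/3) = b 2 / b 6"
      "qnum (u ^ 3) (1/2) = b 3 / b 6"
    using qnum_cube[OF assms(1), of 1] qnum_cube[OF assms(1), of 2] qnum_cube[OF assms(1), of 3]
    by (simp_all add: b_def)
  moreover have "qpi (u ^ 3) = b 6 * r * (Q 6)\<^sup>2 / (Q 3)\<^sup>2"
    by (simp add: qpi_def Q_def b_def r_def power_mult[symmetric])
  moreover have "(u ^ 3)\<^sup>2 = u ^ 6"
    by (simp add: power_mult[symmetric])
  ultimately have rhs: "?rhs = b 1 / b 6 / ((b 2 / b 6)\<^sup>2 * (b 3 / b 6))
      * (Q 4 * Q 2 * (r * u\<^sup>2)) / (Q 1 * Q 5 * (b 6 * r * (Q 6)\<^sup>2 / (Q 3)\<^sup>2))"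
    by (simp only: Q_def)
  have lhs: "?lhs = b 6 * b 3 * u\<^sup>2 / (b 2 * b 5) * ((Q 9)\<^sup>2 * Q 8 * Q 4 / ((Q 6)\<^sup>2 * Q 7 * Q 11))"
    by (simp add: tele_const_def tele_limit_def b_def Q_def)
  have "0 < r"
    using assms by (simp add: r_def)
  then show ?thesis
    unfolding lhs rhs Q_shift[of 1] Q_shift[of 2] Q_shift[of 3] Q_shift[of 5]
    using Q_nz[of 4] Q_nz[of 6] Q_nz[of 7] Q_nz[of 8] Q_nz[of 9] Q_nz[of 11]
      b_nz[of 1] b_nz[of 2] b_nz[of 3] b_nz[of 5] b_nz[of 6] assms
    by (simp add: field_simps power2_eq_square)
qed

lemma leading_term_eq_tele_const:
  assumes "0 < u" "u < 1"
  shows "(u ^ 3) powr (2/3) / ((1 + u ^ 3) * qnum (u ^ 3) (1/3) * qnum (u ^ 3) (5/6)) = tele_const u"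
proof -
  have "0 < u ^ 3" "u ^ 3 < 1" "u\<^sup>2 < 1" "u ^ 5 < 1"
    using assms by (simp_all add: power_less_one_iff)
  then have nz: "1 + u ^ 3 \<noteq> 0" "1 - u ^ 3 \<noteq> 0" "1 - u\<^sup>2 \<noteq> 0" "1 - u ^ 5 \<noteq> 0"
    by linarith+
  have six: "1 - u ^ 6 = (1 - u ^ 3) * (1 + u ^ 3)"
    by algebra
  have "(u ^ 3) powr (2/3) = u\<^sup>2"
    using powr_cube[OF assms(1), of 2] by simp
  moreover have "qnum (u ^ 3) (1/3) = (1 - u\<^sup>2) / ((1 - u ^ 3) * (1 + u ^ 3))"
      "qnum (u ^ 3) (5/6) = (1 - u ^ 5) / ((1 - u ^ 3) * (1 + u ^ 3))"
    using qnum_cube[OF assms(1), of 2] qnum_cube[OF assms(1), of 5] by (simp_all add: six)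
  moreover have "s / (c * (x / (b * c)) * (y / (b * c))) = b * c * b * s / (x * y)"
    if "b \<noteq> 0" "c \<noteq> 0" for s b c x y :: real
    using that by (simp add: field_simps power2_eq_square)
  ultimately show ?thesis
    using nz by (simp add: tele_const_def six)
qed

theorem mainTheorem13:
  fixes q :: real
  assumes "0 < q" "q < 1"
  shows "q powr (2/3) / ((1 + q) * qnum q (1/3) * qnum q (5/6))
    - (\<Sum>n. (1 - q ^ (4 * Suc n + 1)) * (qshift q (1/2) (Suc n))\<^sup>2 * qshift q (1/3) (Suc n)
              * qshift q (2/3) n
            / ((1 - q\<^sup>2) * (qfact q (Suc n))\<^sup>2 * qshift q (7/6) (Suc n) * qshift q (5/6) (Suc n + 1))
            * q ^ (2 * Suc n))
    = qnum q (1/6) / ((qnum q (1/3))\<^sup>2 * qnum q (1/2))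
      * (qpoch_inf (q powr (4/3)) (q\<^sup>2) * qpoch_inf (q powr (2/3)) (q\<^sup>2) * q powr (11/12))
      / (qpoch_inf (q powr (1/3)) (q\<^sup>2) * qpoch_inf (q powr (5/3)) (q\<^sup>2) * qpi q)"
proof -
  define u where "u = root 3 q"
  have u: "0 < u" "u < 1"
    using assms by (simp_all add: u_def)
  have q: "q = u ^ 3"
    using assms by (simp add: u_def)
  have "suminf (summand (u ^ 3)) = tele_const u * (1 - tele_limit u)"
    using summand_sums[OF u] by (rule sums_unique[symmetric])
  then show ?thesis
    using leading_term_eq_tele_const[OF u] tele_limit_closed_form[OF u]
    unfolding q summand_def by (simp add: right_diff_distrib)
qed

end
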